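(* Let $\mathcal{P}$ be a topological property that is clopen hereditary (i.e., every subspace that is both open and closed in a space with $\mathcal{P}$ has $\mathcal{P}$). If a topological space $X$ is dense-$\mathcal{P}$, then every open subspace of $X$ is dense-$\mathcal{P}$.
   Context: For a topological property $\mathcal{P}$, a space $X$ is called dense-$\mathcal{P}$ if every dense subset of $X$ (with the subspace topology) has $\mathcal{P}$. No separation axioms are assumed. *)

theory Defs
  imports "HOL-Analysis.Analysis"
begin

definition topological_property :: "('a topology \<Rightarrow> bool) \<Rightarrow> bool" where
  "topological_property P \<longleftrightarrow>
     (\<forall>X Y. P X \<and> X homeomorphic_space Y \<longrightarrow> P Y)"

definition clopen_hereditary :: "('a topology \<Rightarrow> bool) \<Rightarrow> bool" where
  "clopen_hereditary P \<longleftrightarrow>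
     (\<forall>X S. P X \<and> openin X S \<and> closedin X S \<longrightarrow> P (subtopology X S))"

definition dense_P :: "('a topology \<Rightarrow> bool) \<Rightarrow> 'a topology \<Rightarrow> bool" where
  "dense_P P X \<longleftrightarrow>
     (\<forall>D. D \<subseteq> topspace X \<and> X closure_of D = topspace X \<longrightarrow> P (subtopology X D))"

end

theory Submission
  imports Defs
begin

text \<open>Let D be dense in an open subspace U of X. Then E = D \<union> (X - cl D) is dense in X, so E has P.
  Inside E the set D is closed, being E \<inter> cl D, and open, being E \<inter> U because U \<subseteq> cl D.
  Hence D has P by clopen heredity.\<close>

lemma closure_of_Un_complement_closure:
  assumes "D \<subseteq> topspace X"
  shows "X closure_of (D \<union> (topspace X - X closure_of D)) = topspace X"
proof -
  let ?E = "D \<union> (topspace X - X closure_of D)"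
  have "X closure_of D \<subseteq> X closure_of ?E"
    by (rule closure_of_mono) simp
  moreover have "?E \<subseteq> X closure_of ?E"
    by (rule closure_of_subset) (use assms in auto)
  ultimately have "topspace X \<subseteq> X closure_of ?E"
    by blast
  then show ?thesis
    using closure_of_subset_topspace by (rule subset_antisym[rotated])
qed

lemma open_subtopology_dense_imp_subset_closure_of:
  assumes "openin X U" and "subtopology X U closure_of D = topspace (subtopology X U)"
  shows "U \<subseteq> X closure_of D"
proof -
  have "U \<inter> X closure_of D = subtopology X U closure_of D"
    using assms(1) by (simp add: closure_of_subtopology_open)
  also have "\<dots> = U"
    using assms openin_subset by auto
  finally show ?thesis
    by blast
qed

lemma clopen_in_Un_complement_closure:
  assumes "openin X U" and "D \<subseteq> U" and "U \<subseteq> X closure_of D"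
  defines "E \<equiv> D \<union> (topspace X - X closure_of D)"
  shows "openin (subtopology X E) D" and "closedin (subtopology X E) D"
proof -
  have "D \<subseteq> topspace X"
    using assms(1,2) openin_subset by blast
  then have "D \<subseteq> X closure_of D"
    by (rule closure_of_subset)
  have "D = U \<inter> E"
    using assms(2,3) unfolding E_def by blast
  then show "openin (subtopology X E) D"
    using assms(1) by (simp add: openin_subtopology_Int)
  have "D = X closure_of D \<inter> E"
    using \<open>D \<subseteq> X closure_of D\<close> unfolding E_def by blast
  then show "closedin (subtopology X E) D"
    by (metis closedin_closure_of closedin_subtopology)
qed

lemma dense_P_imp_P_dense_in_open:
  assumes "clopen_hereditary P" and "dense_P P X"
    and "openin X U" and "D \<subseteq> U" and "U \<subseteq> X closure_of D"
  shows "P (subtopology X D)"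
proof -
  define E where "E = D \<union> (topspace X - X closure_of D)"
  have "D \<subseteq> topspace X"
    using assms(3,4) openin_subset by blast
  then have "P (subtopology X E)"
    using assms(2) closure_of_Un_complement_closure[of D X]
    unfolding dense_P_def E_def by (metis Diff_subset Un_least)
  then have "P (subtopology (subtopology X E) D)"
    using assms(1) clopen_in_Un_complement_closure[OF assms(3-5)]
    unfolding clopen_hereditary_def E_def by metis
  moreover have "D \<subseteq> E"
    by (simp add: E_def)
  ultimately show ?thesis
    by (simp add: subtopology_subtopology Int_absorb1)
qed

theorem mainTheorem2:
  fixes P :: "'a topology \<Rightarrow> bool" and X :: "'a topology"
  assumes "topological_property P"
    and "clopen_hereditary P"
    and "dense_P P X"
  shows "\<forall>U. openin X U \<longrightarrow> dense_P P (subtopology X U)"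
proof (intro allI impI)
  fix U assume U: "openin X U"
  show "dense_P P (subtopology X U)"
    unfolding dense_P_def
  proof (intro allI impI)
    fix D assume D: "D \<subseteq> topspace (subtopology X U) \<and>
      subtopology X U closure_of D = topspace (subtopology X U)"
    then have "D \<subseteq> U" by simp
    moreover have "U \<subseteq> X closure_of D"
      using D U open_subtopology_dense_imp_subset_closure_of by blast
    ultimately have "P (subtopology X D)"
      using assms(2,3) U dense_P_imp_P_dense_in_open by blast
    with \<open>D \<subseteq> U\<close> show "P (subtopology (subtopology X U) D)"
      by (simp add: subtopology_subtopology Int_absorb1)
  qed
qed

end
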